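(* Let $K$ be a field of characteristic $p$, let $n\ge 1$, let $\alpha,\lambda\in K\setminus K^p$, and let $f\colon V_{n,\alpha}\to V_{1,\lambda}\subset \mathbf{G}_a^p$ be a nonzero $K$-group homomorphism. Then $K^p(\alpha)=K^p(\lambda)$, and each coordinate of $f$, written as a $p$-polynomial in $S,(S_j)_j$ of degree at most $1$ in $S$, has the form $aS+\sum_j b_j S_j^{p^{n-1}}$ with $a,b_j\in K$ (i.e. it is homogeneous linear in $S$ and homogeneous of degree $p^{n-1}$ in the $S_j$). Moreover, if $X, X_0,\dots,X_{p-2}$ denote the coordinates on $V_{1,\lambda}$, then the $X$-coordinate of $f$ is $aS$ for some $0\neq a\in K$.
   Context: For $\beta\in K$ and $m\ge 1$, $V_{m,\beta}$ is the $K$-subgroup scheme of $\mathbf{G}_a^{p^m-p^{m-1}+1}$, with coordinates $S$ and $S_j$ for $0\le j<p^m$, $j\not\equiv -1 \pmod p$, defined by $$-S + \beta^{p-1}S^p + \sum_{\substack{0\le j<p^m\\ j\not\equiv -1 \ (\mathrm{mod}\ p)}} \beta^j S_j^{p^m} = 0.$$ In particular $V_{1,\lambda}\subset\mathbf{G}_a^p$ has coordinates $X,X_0,\dots,X_{p-2}$ and equation $-X+\lambda^{p-1}X^p+\sum_{j=0}^{p-2}\lambda^jX_j^p=0$. A $p$-polynomial is a polynomial that is a sum of terms $cY^{p^e}$ with $c\in K$, $e\ge 0$, $Y$ a variable. Every homomorphism $V_{n,\alpha}\to\mathbf{G}_a$ is given by a unique $p$-polynomial in $S,(S_j)_j$ of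 degree at most $1$ in $S$. *)

theory Defs
  imports Main "HOL-Library.Poly_Mapping" "HOL-Computational_Algebra.Primes"
begin

datatype var = SV | SJ nat

type_synonym 'k mpoly = "(var \<Rightarrow>\<^sub>0 nat) \<Rightarrow>\<^sub>0 'k"

definition mconst :: "'k::comm_ring_1 \<Rightarrow> 'k mpoly" where
  "mconst c = Poly_Mapping.single 0 c"

definition mvar :: "var \<Rightarrow> 'k::comm_ring_1 mpoly" where
  "mvar v = Poly_Mapping.single (Poly_Mapping.single v 1) 1"

definition Jidx :: "nat \<Rightarrow> nat \<Rightarrow> nat set" where
  "Jidx p m = {j. j < p ^ m \<and> j mod p \<noteq> p - 1}"

definition Veq :: "nat \<Rightarrow> nat \<Rightarrow> 'k::comm_ring_1 \<Rightarrow> 'k mpoly" where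
  "Veq p m \<beta> = - mvar SV + mconst (\<beta> ^ (p - 1)) * mvar SV ^ p
      + (\<Sum>j\<in>Jidx p m. mconst (\<beta> ^ j) * mvar (SJ j) ^ (p ^ m))"

definition is_ppoly :: "nat \<Rightarrow> 'k::comm_ring_1 mpoly \<Rightarrow> bool" where
  "is_ppoly p P \<longleftrightarrow> (\<forall>m\<in>Poly_Mapping.keys P. \<exists>v e. m = Poly_Mapping.single v (p ^ e))"

definition degS_le1 :: "'k::comm_ring_1 mpoly \<Rightarrow> bool" where
  "degS_le1 P \<longleftrightarrow> (\<forall>m\<in>Poly_Mapping.keys P. Poly_Mapping.lookup m SV \<le> 1)"

definition hom_coord :: "nat \<Rightarrow> nat \<Rightarrow> 'k::comm_ring_1 mpoly \<Rightarrow> bool" where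
  "hom_coord p n P \<longleftrightarrow> is_ppoly p P \<and> degS_le1 P \<and>
     (\<forall>m\<in>Poly_Mapping.keys P. \<forall>j. Poly_Mapping.lookup m (SJ j) \<noteq> 0 \<longrightarrow> j \<in> Jidx p n)"

(* A K-group homomorphism f : V_{n,alpha} \<rightarrow> V_{1,lambda} \<subseteq> G_a^p, given by its
  coordinates F (the X-coordinate) and Fs j (the X_j-coordinate, j \<le> p-2):
  each is a homomorphism V_{n,alpha} \<rightarrow> G_a (a p-polynomial of degree \<le> 1 in S),
  and the defining equation of V_{1,lambda} pulled back along f vanishes in the
  coordinate ring K[S,S_j]/(Veq p n alpha) of V_{n,alpha}. *)
definition is_hom_V :: "nat \<Rightarrow> nat \<Rightarrow> 'k::field \<Rightarrow> 'k \<Rightarrow> 'k mpoly \<Rightarrow> (nat \<Rightarrow> 'k mpoly) \<Rightarrow> bool" where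
  "is_hom_V p n \<alpha> lam F Fs \<longleftrightarrow>
     hom_coord p n F \<and> (\<forall>j<p - 1. hom_coord p n (Fs j)) \<and>
     Veq p n \<alpha> dvd
       (- F + mconst (lam ^ (p - 1)) * F ^ p + (\<Sum>j<p - 1. mconst (lam ^ j) * Fs j ^ p))"

definition is_subfield :: "'k::field set \<Rightarrow> bool" where
  "is_subfield F \<longleftrightarrow> 0 \<in> F \<and> 1 \<in> F \<and> (\<forall>x\<in>F. \<forall>y\<in>F. x + y \<in> F \<and> x * y \<in> F)
     \<and> (\<forall>x\<in>F. - x \<in> F \<and> inverse x \<in> F)"

definition Kp_adj :: "nat \<Rightarrow> 'k::field \<Rightarrow> 'k set" where
  "Kp_adj p a = \<Inter>{F. is_subfield F \<and> range (\<lambda>x. x ^ p) \<subseteq> F \<and> a \<in> F}"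

end

theory Submission
  imports Defs "HOL-Computational_Algebra.Polynomial"
begin

text \<open>
  Substitute \<open>S := y\<close>, \<open>S_j := x\<close> and \<open>S_k := 0\<close> for \<open>k \<noteq> j\<close>. The divisibility of the pulled-back
  equation of \<open>V_{1,\<lambda>}\<close> by the equation of \<open>V_{n,\<alpha>}\<close> becomes an identity in \<open>K[x][y]\<close> between
  two polynomials whose only \<open>y\<close>-degrees are \<open>0\<close>, \<open>1\<close> and \<open>p\<close>; so the quotient is the constant \<open>a\<close>,
  the \<open>S\<close>-coefficient of the \<open>X\<close>-coordinate \<open>F\<close>. Comparing coefficients gives
  \<open>\<lambda>^(p-1) a^p + \<Sum> \<lambda>^i a_i^p = a \<alpha>^(p-1)\<close> and, along the coefficients \<open>u_e\<close> of \<open>S_j^(p^e)\<close> in \<open>F\<close>,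
  a chain \<open>u_0 = 0\<close>, \<open>u_(e+1) = \<lambda>^(p-1) u_e^p + \<Sum> \<lambda>^i v_(i,e)^p\<close> that ends in \<open>a \<alpha>^j\<close>.

  Since \<open>\<lambda> \<notin> K^p\<close>, the powers \<open>1, \<lambda>, ..., \<lambda>^(p-1)\<close> are linearly independent over \<open>K^p\<close>, so all these
  representations are unique. Hence \<open>a = 0\<close> would force the homomorphism to vanish; with \<open>a \<noteq> 0\<close>
  the two relations put \<open>\<alpha>\<close> into \<open>K^p(\<lambda>)\<close>, and the exchange property gives \<open>K^p(\<alpha>) = K^p(\<lambda>)\<close>.
  Uniqueness also yields \<open>u_(r+pk) = \<alpha>^k u_r\<close> for the last terms of the chains, and an element
  whose \<open>\<alpha>\<close>-orbit consists of last terms of chains of length \<open>m \<ge> 1\<close> must vanish (induction on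
  \<open>m\<close>, using \<open>K^p(\<alpha>) = K^p(\<lambda>)\<close> for \<open>m = 1\<close>). So \<open>F = a S\<close>, and the other coordinates keep only
  their terms of degree \<open>p^(n-1)\<close> in the \<open>S_j\<close>.
\<close>

section \<open>Subfields and polynomials over a subfield\<close>

lemma is_subfield_sum:
  assumes "is_subfield E" "\<And>i. i \<in> A \<Longrightarrow> f i \<in> E"
  shows "sum f A \<in> E"
  using assms(2) by (induction A rule: infinite_finite_induct) (use assms(1) in \<open>auto simp: is_subfield_def\<close>)

lemma is_subfield_power:
  assumes "is_subfield E" "x \<in> E"
  shows "x ^ k \<in> E"
  using assms by (induction k) (auto simp: is_subfield_def)

lemma is_subfield_diff:
  assumes "is_subfield E" "x \<in> E" "y \<in> E"
  shows "x - y \<in> E"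
  using assms unfolding is_subfield_def by (metis diff_conv_add_uminus)

lemma is_subfield_divide:
  assumes "is_subfield E" "x \<in> E" "y \<in> E"
  shows "x / y \<in> E"
  using assms unfolding is_subfield_def by (metis divide_inverse)

lemma is_subfield_of_nat:
  assumes "is_subfield E"
  shows "of_nat k \<in> E"
  using assms by (induction k) (auto simp: is_subfield_def)

definition poly_over :: "'a::zero set \<Rightarrow> 'a poly \<Rightarrow> bool" where
  "poly_over E q \<longleftrightarrow> (\<forall>i. coeff q i \<in> E)"

lemma poly_over_divmod:
  fixes f q :: "'a::field poly"
  assumes E: "is_subfield E" and q: "poly_over E q" "lead_coeff q = 1" and f: "poly_over E f"
  obtains s r where "poly_over E r" "f = s * q + r" "r = 0 \<or> degree r < degree q"
  using f
proof (induction "degree f" arbitrary: f thesis rule: less_induct)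
  case less
  show ?case
  proof (cases "f = 0 \<or> degree f < degree q")
    case True
    then show ?thesis using less.prems by (intro less.prems(1)[of f 0]) auto
  next
    case False
    define d where "d = degree f - degree q"
    define f' where "f' = f - monom (lead_coeff f) d * q"
    have "coeff f i - (if i < d then 0 else lead_coeff f * coeff q (i - d)) \<in> E" for i
      using less.prems(2) q(1) E by (intro is_subfield_diff) (auto simp: poly_over_def is_subfield_def)
    then have f'_over: "poly_over E f'"
      unfolding poly_over_def f'_def coeff_diff coeff_monom_mult by blast
    have "degree (monom (lead_coeff f) d * q) \<le> degree f"
      using degree_mult_le[of "monom (lead_coeff f) d" q] degree_monom_le[of "lead_coeff f" d] False
      unfolding d_def by linarith
    moreover have "coeff f' (degree f) = 0"
      using False q(2) by (simp add: f'_def d_def coeff_monom_mult)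
    ultimately have "f' = 0 \<or> degree f' < degree f"
      unfolding f'_def by (metis degree_diff_le le_refl le_neq_implies_less leading_coeff_0_iff)
    then show ?thesis
    proof
      assume "f' = 0"
      then show ?thesis
        by (intro less.prems(1)[of 0 "monom (lead_coeff f) d"]) (auto simp: poly_over_def f'_def E[unfolded is_subfield_def])
    next
      assume "degree f' < degree f"
      then obtain s r where "poly_over E r" "f' = s * q + r" "r = 0 \<or> degree r < degree q"
        using less.hyps f'_over by blast
      then show ?thesis
        by (intro less.prems(1)[of r "s + monom (lead_coeff f) d"]) (auto simp: f'_def algebra_simps)
    qed
  qed
qed

lemma monic_dvd_linear_power:
  fixes x :: "'a::field"
  assumes "lead_coeff q = 1" "q dvd [:- x, 1:] ^ n"
  shows "q = [:- x, 1:] ^ degree q"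
  using assms
proof (induction n arbitrary: q)
  case 0
  then have "degree q = 0" using divides_degree[of q 1] by simp
  then show ?case using 0(1) by (auto elim!: degree_eq_zeroE)
next
  case (Suc n)
  obtain t where t: "[:- x, 1:] ^ Suc n = q * t" using Suc.prems(2) by (elim dvdE)
  show ?case
  proof (cases "poly q x = 0")
    case False
    then have "poly t x = 0" using arg_cong[OF t, of "\<lambda>f. poly f x"] by simp
    then obtain t1 where "t = [:- x, 1:] * t1" by (metis dvdE poly_eq_0_iff_dvd)
    then have "[:- x, 1:] * [:- x, 1:] ^ n = [:- x, 1:] * (q * t1)"
      using t by (metis power_Suc mult.left_commute)
    then have "[:- x, 1:] ^ n = q * t1" by (metis mult_cancel_left pCons_eq_0_iff one_neq_zero)
    then show ?thesis using Suc.IH Suc.prems(1) by (metis dvdI)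
  next
    case True
    then obtain q1 where q1: "q = [:- x, 1:] * q1" by (metis dvdE poly_eq_0_iff_dvd)
    then have "[:- x, 1:] * [:- x, 1:] ^ n = [:- x, 1:] * (q1 * t)"
      using t by (metis power_Suc mult.assoc)
    then have "[:- x, 1:] ^ n = q1 * t" by (metis mult_cancel_left pCons_eq_0_iff one_neq_zero)
    moreover have "lead_coeff q1 = 1"
      using Suc.prems(1) q1 lead_coeff_mult[of "[:- x, 1:]" q1] by simp
    ultimately have "q1 = [:- x, 1:] ^ degree q1" using Suc.IH by (metis dvdI)
    moreover have "degree q = Suc (degree q1)"
      unfolding q1 using \<open>lead_coeff q1 = 1\<close> by (subst degree_mult_eq) auto
    ultimately show ?thesis using q1 by simp
  qed
qed

section \<open>Fields of prime characteristic\<close>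

locale prime_char =
  fixes p :: nat and field_type :: "'a::field itself"
  assumes CHAR_eq: "CHAR('a) = p" and prime: "prime p"
begin

lemma two_le_p: "2 \<le> p"
  using prime prime_ge_2_nat by blast

lemma zero_power_p [simp]: "0 ^ p = (0::'a)"
  using two_le_p by simp

lemma power_p_sum: "(\<Sum>i\<in>A. f i) ^ p = (\<Sum>i\<in>A. f i ^ p)" for f :: "'b \<Rightarrow> 'a"
  by (rule freshmans_dream_sum) (use CHAR_eq prime in auto)

lemma power_p_add: "(x + y :: 'a) ^ p = x ^ p + y ^ p"
  by (rule freshmans_dream) (use CHAR_eq prime in auto)

lemma power_p_minus: "(- x :: 'a) ^ p = - (x ^ p)"
  by (rule minus_power_prime_CHAR) (use CHAR_eq prime in auto)

lemma power_p_diff: "(x - y :: 'a) ^ p = x ^ p - y ^ p"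
  by (metis diff_conv_add_uminus power_p_add power_p_minus)

lemma linear_poly_power_p: "[:- x, 1:] ^ p = monom 1 p - [:x ^ p:]" for x :: 'a
proof -
  have "[:- x, 1:] = [:- x:] + monom 1 1" by (simp add: monom_Suc)
  then have "[:- x, 1:] ^ p = ([:- x:] + monom 1 1) ^ p" by simp
  also have "\<dots> = [:- x:] ^ p + monom 1 1 ^ p"
    by (rule freshmans_dream) (simp_all add: CHAR_eq prime)
  also have "(- x) ^ p = - (x ^ p)" by (rule power_p_minus)
  ultimately show ?thesis by (simp add: monom_power poly_const_pow)
qed

lemma mem_subfield_if_monic_dvd_linear_power:
  fixes x :: 'a
  assumes E: "is_subfield E" and q: "poly_over E q" "lead_coeff q = 1" "q dvd [:- x, 1:] ^ k"
    and deg: "0 < degree q" "degree q < p"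
  shows "x \<in> E"
proof -
  define m where "m = degree q"
  have "q = [:- x, 1:] ^ m" using monic_dvd_linear_power[OF q(2,3)] by (simp add: m_def)
  then have "coeff q (m - 1) = of_nat m * - x"
    using deg coeff_linear_poly_power[of "m - 1" m "- x" 1] by (cases m) (simp_all add: m_def)
  moreover have "coeff q (m - 1) \<in> E" using q(1) by (simp add: poly_over_def)
  ultimately have "(of_nat m * - x) / of_nat m \<in> E"
    using E by (metis is_subfield_divide is_subfield_of_nat)
  moreover have "of_nat m \<noteq> (0::'a)"
    using deg by (auto simp: m_def of_nat_eq_0_iff_char_dvd CHAR_eq dest: dvd_imp_le)
  ultimately have "- x \<in> E" by simp
  then show ?thesis using E unfolding is_subfield_def by (metis minus_minus)
qed

lemma degree_ge_p_if_root:
  fixes x :: 'a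
  assumes E: "is_subfield E" and x: "x ^ p \<in> E" "x \<notin> E"
    and q: "poly_over E q" "q \<noteq> 0" "poly q x = 0"
  shows "p \<le> degree q"
  using q
proof (induction "degree q" arbitrary: q rule: less_induct)
  case less
  define qm where "qm = smult (inverse (lead_coeff q)) q"
  have "lead_coeff q \<in> E" using less.prems(1) by (simp add: poly_over_def)
  then have qm: "poly_over E qm" "lead_coeff qm = 1" "degree qm = degree q" "poly qm x = 0"
    using less.prems E by (auto simp: qm_def poly_over_def is_subfield_def)
  have "poly_over E (monom 1 p - [:x ^ p:])"
    using E x(1) unfolding poly_over_def
    by (auto intro!: is_subfield_diff simp: coeff_monom coeff_pCons is_subfield_def split: nat.splits)
  then obtain s r where sr: "poly_over E r" "[:- x, 1:] ^ p = s * qm + r" "r = 0 \<or> degree r < degree q"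
    using poly_over_divmod[OF E qm(1,2)] qm(3) linear_poly_power_p by metis
  show ?case
  proof (cases "r = 0")
    case False
    have "p > 0" using two_le_p by simp
    then have "poly r x = 0"
      using arg_cong[OF sr(2), of "\<lambda>f. poly f x"] qm(4) by (simp add: zero_power[OF \<open>p > 0\<close>])
    then have "p \<le> degree r" using less.hyps sr False by auto
    then show ?thesis using sr(3) False by simp
  next
    case True
    then have "qm dvd [:- x, 1:] ^ p" using sr(2) by simp
    moreover have "degree q \<noteq> 0"
    proof
      assume "degree q = 0"
      then obtain c where "q = [:c:]" by (auto elim: degree_eq_zeroE)
      then show False using less.prems(2,3) by simp
    qed
    ultimately show ?thesis
      using mem_subfield_if_monic_dvd_linear_power[OF E qm(1,2)] qm(3) x(2) by fastforce
  qed
qed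

lemma pth_root_powers_independent:
  fixes x :: 'a
  assumes E: "is_subfield E" and x: "x ^ p \<in> E" "x \<notin> E"
    and e: "\<And>i. i < p \<Longrightarrow> e i \<in> E" and sum: "(\<Sum>i<p. e i * x ^ i) = 0"
  shows "i < p \<Longrightarrow> e i = 0"
proof -
  define q where "q = (\<Sum>i<p. monom (e i) i)"
  have coeff_q: "coeff q i = (if i < p then e i else 0)" for i
    by (simp add: q_def coeff_sum coeff_monom)
  have "poly_over E q" using e E by (simp add: poly_over_def coeff_q is_subfield_def)
  moreover have "poly q x = 0" using sum by (simp add: q_def poly_sum poly_monom)
  moreover have "degree q < p"
    using two_le_p by (intro degree_lessI) (auto simp: coeff_q)
  ultimately have "q = 0" using degree_ge_p_if_root[OF E x] by (meson leD)
  then show "i < p \<Longrightarrow> e i = 0" using coeff_q[of i] by simp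
qed

lemma subfield_pth_powers: "is_subfield (range (\<lambda>x::'a. x ^ p))"
  unfolding is_subfield_def
proof (intro conjI ballI)
  show "0 \<in> range (\<lambda>x::'a. x ^ p)" "1 \<in> range (\<lambda>x::'a. x ^ p)"
    using two_le_p by (auto intro!: image_eqI[of _ _ 0] image_eqI[of _ _ 1])
  fix x y assume "x \<in> range (\<lambda>x::'a. x ^ p)" "y \<in> range (\<lambda>x::'a. x ^ p)"
  then obtain a b where ab: "x = a ^ p" "y = b ^ p" by auto
  show "x + y \<in> range (\<lambda>x::'a. x ^ p)"
    using ab by (auto simp: power_p_add intro!: image_eqI[of _ _ "a + b"])
  show "x * y \<in> range (\<lambda>x::'a. x ^ p)"
    using ab by (auto simp: power_mult_distrib intro!: image_eqI[of _ _ "a * b"])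
  show "- x \<in> range (\<lambda>x::'a. x ^ p)"
    using ab by (auto simp: power_p_minus intro!: image_eqI[of _ _ "- a"])
  show "inverse x \<in> range (\<lambda>x::'a. x ^ p)"
    using ab by (auto simp: power_inverse intro!: image_eqI[of _ _ "inverse a"])
qed

end

definition Kp_span :: "nat \<Rightarrow> 'a::field \<Rightarrow> 'a set" where
  "Kp_span p x = range (\<lambda>c. \<Sum>i<p. c i ^ p * x ^ i)"

context prime_char
begin

lemma Kp_spanI: "(\<Sum>i<p. c i ^ p * x ^ i) \<in> Kp_span p x"
  unfolding Kp_span_def by (rule rangeI)

lemma Kp_span_monomial: "i < p \<Longrightarrow> c ^ p * x ^ i \<in> Kp_span p (x::'a)"
proof -
  assume "i < p"
  then have "(\<Sum>j<p. (if j = i then c else 0) ^ p * x ^ j) = c ^ p * x ^ i"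
    using two_le_p by (simp add: if_distrib[of "\<lambda>a. a ^ p"] if_distrib[of "\<lambda>a. a * _"] cong: if_cong)
  then show ?thesis by (metis Kp_spanI)
qed

lemma Kp_span_pth_power: "c ^ p \<in> Kp_span p (x::'a)"
  using Kp_span_monomial[of 0 c x] two_le_p by simp

lemma Kp_span_self: "x \<in> Kp_span p (x::'a)"
  using Kp_span_monomial[of 1 1 x] two_le_p by simp

lemma Kp_span_zero: "0 \<in> Kp_span p (x::'a)"
  using Kp_span_pth_power[of 0 x] by simp

lemma Kp_span_one: "1 \<in> Kp_span p (x::'a)"
  using Kp_span_pth_power[of 1 x] by simp

lemma Kp_span_add: "y \<in> Kp_span p x \<Longrightarrow> z \<in> Kp_span p x \<Longrightarrow> y + z \<in> Kp_span p (x::'a)"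
proof -
  assume "y \<in> Kp_span p x" "z \<in> Kp_span p x"
  then obtain c d where "y = (\<Sum>i<p. c i ^ p * x ^ i)" "z = (\<Sum>i<p. d i ^ p * x ^ i)"
    by (auto simp: Kp_span_def)
  then have "y + z = (\<Sum>i<p. (c i + d i) ^ p * x ^ i)"
    by (simp add: power_p_add sum.distrib distrib_right)
  then show ?thesis by (simp only: Kp_spanI)
qed

lemma Kp_span_uminus: "y \<in> Kp_span p x \<Longrightarrow> - y \<in> Kp_span p (x::'a)"
proof -
  assume "y \<in> Kp_span p x"
  then obtain c where "y = (\<Sum>i<p. c i ^ p * x ^ i)" by (auto simp: Kp_span_def)
  then have "- y = (\<Sum>i<p. (- c i) ^ p * x ^ i)" by (simp add: power_p_minus sum_negf)
  then show ?thesis by (simp only: Kp_spanI)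
qed

lemma Kp_span_pth_power_mult: "y \<in> Kp_span p x \<Longrightarrow> c ^ p * y \<in> Kp_span p (x::'a)"
proof -
  assume "y \<in> Kp_span p x"
  then obtain d where "y = (\<Sum>i<p. d i ^ p * x ^ i)" by (auto simp: Kp_span_def)
  then have "c ^ p * y = (\<Sum>i<p. (c * d i) ^ p * x ^ i)"
    by (simp add: sum_distrib_left power_mult_distrib mult.assoc)
  then show ?thesis by (simp only: Kp_spanI)
qed

lemma Kp_span_sum: "(\<And>i. i \<in> I \<Longrightarrow> f i \<in> Kp_span p (x::'a)) \<Longrightarrow> sum f I \<in> Kp_span p x"
  by (induction I rule: infinite_finite_induct) (auto intro: Kp_span_add Kp_span_zero)

lemma Kp_span_mult_self: "y \<in> Kp_span p x \<Longrightarrow> x * y \<in> Kp_span p (x::'a)"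
proof -
  assume "y \<in> Kp_span p x"
  then obtain c where y: "y = (\<Sum>i<p. c i ^ p * x ^ i)" by (auto simp: Kp_span_def)
  have "c i ^ p * x ^ Suc i \<in> Kp_span p x" if "i < p" for i
  proof (cases "Suc i < p")
    case True
    then show ?thesis by (rule Kp_span_monomial)
  next
    case False
    then have "Suc i = p" using that by simp
    then have "c i ^ p * x ^ Suc i = (c i * x) ^ p * x ^ 0" by (simp add: power_mult_distrib)
    then show ?thesis using Kp_span_monomial[of 0 "c i * x" x] two_le_p by simp
  qed
  then show ?thesis
    unfolding y sum_distrib_left by (intro Kp_span_sum) (simp add: mult.left_commute)
qed

lemma Kp_span_mult: "y \<in> Kp_span p x \<Longrightarrow> z \<in> Kp_span p x \<Longrightarrow> y * z \<in> Kp_span p (x::'a)"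
proof -
  assume z: "z \<in> Kp_span p x" and "y \<in> Kp_span p x"
  then obtain c where y: "y = (\<Sum>i<p. c i ^ p * x ^ i)" by (auto simp: Kp_span_def)
  have xz: "x ^ i * z \<in> Kp_span p x" for i
    using z by (induction i) (auto simp: mult.assoc intro: Kp_span_mult_self)
  have "y * z = (\<Sum>i<p. c i ^ p * (x ^ i * z))"
    unfolding y by (simp add: sum_distrib_right mult.assoc)
  also have "\<dots> \<in> Kp_span p x" by (intro Kp_span_sum Kp_span_pth_power_mult xz)
  finally show ?thesis .
qed

lemma Kp_span_power: "y \<in> Kp_span p x \<Longrightarrow> y ^ k \<in> Kp_span p (x::'a)"
  by (induction k) (simp_all add: Kp_span_one Kp_span_mult)

lemma Kp_span_inverse: "y \<in> Kp_span p x \<Longrightarrow> inverse y \<in> Kp_span p (x::'a)"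
proof (cases "y = 0")
  case False
  assume y: "y \<in> Kp_span p x"
  have "inverse y = inverse y ^ p * y ^ (p - 1)"
    using False two_le_p by (simp add: power_inverse field_simps flip: power_Suc)
  also have "\<dots> \<in> Kp_span p x" by (intro Kp_span_pth_power_mult Kp_span_power y)
  finally show ?thesis .
qed (simp add: Kp_span_zero)

lemma subfield_Kp_span: "is_subfield (Kp_span p (x::'a))"
  unfolding is_subfield_def
  by (intro conjI ballI Kp_span_zero Kp_span_one Kp_span_add Kp_span_mult Kp_span_uminus Kp_span_inverse)

lemma Kp_span_least:
  assumes "is_subfield E" "range (\<lambda>z. z ^ p) \<subseteq> E" "(x::'a) \<in> E"
  shows "Kp_span p x \<subseteq> E"
proof
  fix y assume "y \<in> Kp_span p x"
  then obtain c where y: "y = (\<Sum>i<p. c i ^ p * x ^ i)" by (auto simp: Kp_span_def)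
  have "c i ^ p * x ^ i \<in> E" for i
    using assms is_subfield_power[OF assms(1,3)] unfolding is_subfield_def by blast
  then show "y \<in> E" unfolding y by (intro is_subfield_sum[OF assms(1)])
qed

lemma Kp_adj_eq_Kp_span: "Kp_adj p (x::'a) = Kp_span p x"
proof
  show "Kp_adj p x \<subseteq> Kp_span p x"
    unfolding Kp_adj_def using subfield_Kp_span Kp_span_self Kp_span_pth_power by blast
  show "Kp_span p x \<subseteq> Kp_adj p x"
    unfolding Kp_adj_def using Kp_span_least by blast
qed

lemma Kp_span_exchange:
  assumes y: "y \<in> Kp_span p x" "y \<notin> range (\<lambda>z. z ^ p)"
  shows "(x::'a) \<in> Kp_span p y"
proof (rule ccontr)
  assume x: "x \<notin> Kp_span p y"
  obtain c where y_eq: "y = (\<Sum>i<p. c i ^ p * x ^ i)" using y(1) by (auto simp: Kp_span_def)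
  define e where "e i = c i ^ p - (if i = 0 then y else 0)" for i
  have "(\<Sum>i<p. (if i = 0 then y else 0) * x ^ i) = (\<Sum>i<p. if i = 0 then y else 0)"
    by (intro sum.cong) auto
  also have "\<dots> = y" using two_le_p by simp
  finally have "(\<Sum>i<p. e i * x ^ i) = 0"
    unfolding e_def left_diff_distrib sum_subtractf y_eq[symmetric] by simp
  moreover have "e i \<in> Kp_span p y" for i
    using Kp_span_self[of y] Kp_span_zero[of y] unfolding e_def diff_conv_add_uminus
    by (intro Kp_span_add Kp_span_uminus Kp_span_pth_power) auto
  ultimately have "e 0 = 0"
    using pth_root_powers_independent[OF subfield_Kp_span Kp_span_pth_power x] two_le_p by auto
  then show False using y(2) by (auto simp: e_def)
qed

lemma Kp_span_eq_if_mem: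
  assumes "y \<in> Kp_span p x" "y \<notin> range (\<lambda>z. z ^ p)"
  shows "Kp_span p y = Kp_span p (x::'a)"
  using Kp_span_least[OF subfield_Kp_span] Kp_span_pth_power Kp_span_exchange[OF assms] assms(1)
  by blast

end

text \<open>The equation of \<open>V_{1,l}\<close> without its linear term \<open>-X\<close>, at \<open>X = y\<close> and \<open>X_i = v i\<close>;
  in the basis \<open>1, l, ..., l^(p-1)\<close> of \<open>K^p(l)\<close> over \<open>K^p\<close> the argument \<open>y\<close> gives the top coordinate.\<close>

definition frob_comb :: "nat \<Rightarrow> 'a::field \<Rightarrow> (nat \<Rightarrow> 'a) \<Rightarrow> 'a \<Rightarrow> 'a" where
  "frob_comb p l v y = l ^ (p - 1) * y ^ p + (\<Sum>i<p - 1. l ^ i * v i ^ p)"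

context prime_char
begin

lemma frob_comb_as_sum: "frob_comb p l v y = (\<Sum>i<p. (if i = p - 1 then y else v i) ^ p * (l::'a) ^ i)"
proof -
  have p: "p = Suc (p - 1)" using two_le_p by simp
  have "(\<Sum>i<p. (if i = p - 1 then y else v i) ^ p * l ^ i)
      = (\<Sum>i<p - 1. (if i = p - 1 then y else v i) ^ p * l ^ i) + y ^ p * l ^ (p - 1)"
    by (subst p, subst sum.lessThan_Suc) simp
  also have "(\<Sum>i<p - 1. (if i = p - 1 then y else v i) ^ p * l ^ i) = (\<Sum>i<p - 1. l ^ i * v i ^ p)"
    by (intro sum.cong) (auto simp: mult.commute)
  finally show ?thesis by (simp add: frob_comb_def algebra_simps)
qed

lemma frob_comb_in_Kp_span: "frob_comb p l v y \<in> Kp_span p (l::'a)"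
  unfolding frob_comb_as_sum by (rule Kp_spanI)

lemma frob_comb_inject:
  assumes l: "(l::'a) \<notin> range (\<lambda>x. x ^ p)" and eq: "frob_comb p l v y = frob_comb p l v' y'"
  shows "y = y'" "i < p - 1 \<Longrightarrow> v i = v' i"
proof -
  define c where "c i = (if i = p - 1 then y else v i) - (if i = p - 1 then y' else v' i)" for i
  have "(\<Sum>i<p. c i ^ p * l ^ i) = frob_comb p l v y - frob_comb p l v' y'"
    by (simp add: c_def frob_comb_as_sum power_p_diff left_diff_distrib sum_subtractf)
  then have "(\<Sum>i<p. c i ^ p * l ^ i) = 0" using eq by simp
  then have "c i ^ p = 0" if "i < p" for i
    using pth_root_powers_independent[OF subfield_pth_powers rangeI l rangeI] that by blast
  then have c0: "c i = 0" if "i < p" for i using that by simp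
  show "y = y'" using c0[of "p - 1"] two_le_p by (simp add: c_def)
  show "v i = v' i" if "i < p - 1" using c0[of i] that by (simp add: c_def)
qed

lemma frob_comb_zero [simp]: "frob_comb p l (\<lambda>_. 0) 0 = (0::'a)"
  by (simp add: frob_comb_def)

lemma frob_comb_eq_0D:
  assumes "(l::'a) \<notin> range (\<lambda>x. x ^ p)" "frob_comb p l v y = 0"
  shows "y = 0" "i < p - 1 \<Longrightarrow> v i = 0"
  using frob_comb_inject[OF assms(1), of v y "\<lambda>_. 0" 0] assms(2) by simp_all

lemma frob_comb_pth_power_mult: "c ^ p * frob_comb p l v y = frob_comb p (l::'a) (\<lambda>i. c * v i) (c * y)"
  by (simp add: frob_comb_def sum_distrib_left distrib_left power_mult_distrib mult_ac)

lemma frob_comb_sum: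
  "(\<Sum>k\<in>A. frob_comb p (l::'a) (v k) (y k)) = frob_comb p l (\<lambda>i. \<Sum>k\<in>A. v k i) (\<Sum>k\<in>A. y k)"
  unfolding frob_comb_def power_p_sum sum.distrib sum_distrib_left by (subst sum.swap) (rule refl)

lemma coeff_power_p:
  fixes \<phi> :: "'a poly"
  shows "coeff (\<phi> ^ p) k = (if p dvd k then coeff \<phi> (k div p) ^ p else 0)"
proof -
  have "\<phi> ^ p = (\<Sum>i\<le>degree \<phi>. monom (coeff \<phi> i) i) ^ p"
    by (simp add: poly_as_sum_of_monoms)
  also have "\<dots> = (\<Sum>i\<le>degree \<phi>. monom (coeff \<phi> i ^ p) (i * p))"
    by (subst freshmans_dream_sum) (simp_all add: CHAR_eq prime monom_power)
  finally have coeff_eq: "coeff (\<phi> ^ p) k = (\<Sum>i\<le>degree \<phi>. if k = i * p then coeff \<phi> i ^ p else 0)"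
    by (simp add: coeff_sum coeff_monom eq_commute)
  show ?thesis
  proof (cases "p dvd k")
    case True
    then obtain j where j: "k = j * p" by (metis dvd_def mult.commute)
    have "(\<Sum>i\<le>degree \<phi>. if k = i * p then coeff \<phi> i ^ p else 0)
        = (\<Sum>i\<le>degree \<phi>. if i = j then coeff \<phi> i ^ p else 0)"
      using two_le_p j by (intro sum.cong) auto
    also have "\<dots> = coeff \<phi> j ^ p" by (simp add: coeff_eq_0)
    finally show ?thesis using coeff_eq True j two_le_p by simp
  next
    case False
    then show ?thesis using coeff_eq by (auto intro!: sum.neutral)
  qed
qed

context
  fixes l c :: 'a and n :: nat and \<phi> :: "'a poly" and \<psi> :: "nat \<Rightarrow> 'a poly"
  assumes l: "l \<notin> range (\<lambda>x. x ^ p)"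
    and V1_pullback: "- \<phi> + smult (l ^ (p - 1)) (\<phi> ^ p) + (\<Sum>i<p - 1. smult (l ^ i) (\<psi> i ^ p))
      = monom c (p ^ n)"
begin

lemma V1_pullback_coeff:
  "coeff \<phi> k = l ^ (p - 1) * coeff (\<phi> ^ p) k + (\<Sum>i<p - 1. l ^ i * coeff (\<psi> i ^ p) k)
     - (if k = p ^ n then c else 0)"
  using arg_cong[OF V1_pullback, of "\<lambda>f. coeff f k"] by (simp add: coeff_sum coeff_monom algebra_simps)

lemma V1_pullback_coeff_p_power_Suc:
  "coeff \<phi> (p ^ Suc e) = frob_comb p l (\<lambda>i. coeff (\<psi> i) (p ^ e)) (coeff \<phi> (p ^ e))
     - (if Suc e = n then c else 0)"
proof -
  have "p ^ Suc e = p ^ n \<longleftrightarrow> Suc e = n" by (rule power_inject_exp) (use two_le_p in simp)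
  moreover have "coeff (f ^ p) (p ^ Suc e) = coeff f (p ^ e) ^ p" for f :: "'a poly"
  proof -
    have "p dvd p ^ Suc e" "p ^ Suc e div p = p ^ e" using two_le_p by auto
    then show ?thesis by (simp only: coeff_power_p if_True)
  qed
  ultimately show ?thesis unfolding V1_pullback_coeff[of "p ^ Suc e"] by (simp add: frob_comb_def)
qed

lemma V1_pullback_coeff_1: "1 \<le> n \<Longrightarrow> coeff \<phi> 1 = 0"
proof -
  assume "1 \<le> n"
  then have "1 \<noteq> p ^ n" using two_le_p one_less_power[of p n] by simp
  moreover have "\<not> p dvd 1" using two_le_p by auto
  ultimately show ?thesis unfolding V1_pullback_coeff[of 1] coeff_power_p by simp
qed

lemma V1_pullback_p_power_coeffs_vanish:
  assumes "n \<le> e"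
  shows "coeff \<phi> (p ^ e) = 0 \<and> (\<forall>i<p - 1. coeff (\<psi> i) (p ^ e) = 0)"
proof -
  define D where "D = degree \<phi> + (\<Sum>i<p - 1. degree (\<psi> i))"
  have D: "D < p ^ (D + e)"
    using less_exp[of "D + e"] power_mono[of 2 p "D + e"] two_le_p by linarith
  have "degree (\<psi> i) < p ^ (D + e)" if "i < p - 1" for i
    using that member_le_sum[of i "{..<p - 1}" "\<lambda>i. degree (\<psi> i)"] D by (simp add: D_def)
  moreover have "degree \<phi> < p ^ (D + e)" using D by (simp add: D_def)
  ultimately have top: "coeff \<phi> (p ^ (D + e)) = 0 \<and> (\<forall>i<p - 1. coeff (\<psi> i) (p ^ (D + e)) = 0)"
    by (simp add: coeff_eq_0)
  show ?thesis
  proof (rule inc_induct[of e "D + e"])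
    fix e' assume e': "e \<le> e'" "e' < D + e"
      and IH: "coeff \<phi> (p ^ Suc e') = 0 \<and> (\<forall>i<p - 1. coeff (\<psi> i) (p ^ Suc e') = 0)"
    then have "frob_comb p l (\<lambda>i. coeff (\<psi> i) (p ^ e')) (coeff \<phi> (p ^ e')) = 0"
      using V1_pullback_coeff_p_power_Suc[of e'] assms by simp
    then show "coeff \<phi> (p ^ e') = 0 \<and> (\<forall>i<p - 1. coeff (\<psi> i) (p ^ e') = 0)"
      using frob_comb_eq_0D[OF l] by blast
  qed (use top in simp_all)
qed

end

end

primrec frob_chain :: "nat \<Rightarrow> 'a::field \<Rightarrow> nat \<Rightarrow> 'a set" where
  "frob_chain p l 0 = {0}"
| "frob_chain p l (Suc m) = {frob_comb p l v y | v y. y \<in> frob_chain p l m}"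

lemma add_mult_less_power_Suc:
  fixes p :: nat
  assumes "r < p" "k < p ^ m"
  shows "r + p * k < p ^ Suc m"
proof -
  have "r + p * k < p * (k + 1)" using assms(1) by simp
  also have "\<dots> \<le> p * p ^ m" using assms(2) by (intro mult_left_mono) auto
  finally show ?thesis by simp
qed

lemma finite_Jidx: "finite (Jidx p n)"
  by (rule finite_subset[of _ "{..<p ^ n}"]) (auto simp: Jidx_def)

lemma add_mult_in_Jidx:
  assumes "r < p" "r \<noteq> p - 1" "k < p ^ m"
  shows "r + p * k \<in> Jidx p (Suc m)"
  using add_mult_less_power_Suc[OF assms(1,3)] assms(1,2) by (simp add: Jidx_def)

lemma Jidx_Suc_decompose:
  assumes "j \<in> Jidx p (Suc m)"
  shows "j mod p < p" "j mod p \<noteq> p - 1" "j div p < p ^ m"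
proof -
  have "0 < p" using assms by (auto simp: Jidx_def intro!: gr0I)
  then show "j mod p < p" by simp
  show "j mod p \<noteq> p - 1" "j div p < p ^ m"
    using assms by (auto simp: Jidx_def less_mult_imp_div_less mult.commute[of p])
qed

context prime_char
begin

lemma frob_chain_mem:
  assumes "u 0 = 0" and step: "\<And>e. Suc e < n \<Longrightarrow> u (Suc e) = frob_comb p l (v e) (u e)"
  shows "e < n \<Longrightarrow> u e \<in> frob_chain p l e"
proof (induction e)
  case 0
  then show ?case using assms(1) by simp
next
  case (Suc e)
  then have "u e \<in> frob_chain p l e" by simp
  then show ?case using step[OF Suc.prems] by auto
qed

lemma frob_chain_vanish_below:
  assumes l: "(l::'a) \<notin> range (\<lambda>x. x ^ p)"
    and step: "\<And>e. Suc e < n \<Longrightarrow> u (Suc e) = frob_comb p l (v e) (u e)"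
  shows "m < n \<Longrightarrow> u m = 0 \<Longrightarrow> e < m \<Longrightarrow> u e = 0 \<and> (\<forall>i<p - 1. v e i = 0)"
proof (induction m)
  case (Suc m)
  then have "frob_comb p l (v m) (u m) = 0" using step by simp
  then have "u m = 0 \<and> (\<forall>i<p - 1. v m i = 0)" using frob_comb_eq_0D[OF l] by blast
  then show ?case using Suc by (auto simp: less_Suc_eq)
qed simp

lemma frob_chain_1_orbit_zero:
  assumes l: "(l::'a) \<notin> range (\<lambda>x. x ^ p)" and sub: "Kp_span p l \<subseteq> Kp_span p a"
    and orbit: "\<And>k. k < p \<Longrightarrow> a ^ k * y \<in> frob_chain p l 1"
  shows "y = 0"
proof (rule ccontr)
  assume "y \<noteq> 0"
  obtain v where v: "\<And>k. k < p \<Longrightarrow> a ^ k * y = frob_comb p l (v k) 0"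
    using orbit by simp metis
  have "y \<in> Kp_span p l" using v[of 0] two_le_p frob_comb_in_Kp_span by simp
  then have "l ^ (p - 1) / y \<in> Kp_span p a"
    using sub is_subfield_divide[OF subfield_Kp_span Kp_span_power[OF Kp_span_self]] by blast
  then obtain c where c: "l ^ (p - 1) / y = (\<Sum>k<p. c k ^ p * a ^ k)" by (auto simp: Kp_span_def)
  \<comment> \<open>then \<open>l ^ (p - 1) = (l ^ (p - 1) / y) * y\<close> is a \<open>K\<^sup>p(a)\<close>-combination of the \<open>a ^ k * y\<close>,
    so its top coordinate would vanish\<close>
  have "frob_comb p l (\<lambda>_. 0) 1 = l ^ (p - 1) / y * y" using \<open>y \<noteq> 0\<close> by (simp add: frob_comb_def)
  also have "\<dots> = (\<Sum>k<p. c k ^ p * (a ^ k * y))"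
    unfolding c by (simp add: sum_distrib_right mult.assoc)
  also have "\<dots> = frob_comb p l (\<lambda>i. \<Sum>k<p. c k * v k i) 0"
    by (simp add: v frob_comb_pth_power_mult frob_comb_sum)
  finally show False using frob_comb_inject(1)[OF l] by fastforce
qed

lemma frob_chain_orbit_zero:
  assumes l: "(l::'a) \<notin> range (\<lambda>x. x ^ p)" and sub: "Kp_span p l \<subseteq> Kp_span p a"
  shows "1 \<le> m \<Longrightarrow> (\<And>k. k < p ^ m \<Longrightarrow> a ^ k * y \<in> frob_chain p l m) \<Longrightarrow> y = 0"
proof (induction m arbitrary: y)
  case (Suc m)
  show ?case
  proof (rule frob_chain_1_orbit_zero[OF l sub])
    fix r assume r: "r < p"
    show "a ^ r * y \<in> frob_chain p l 1"
    proof (cases "m = 0")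
      case True
      then show ?thesis using Suc.prems(2) r by simp
    next
      case False
      have "r < p ^ Suc m" using add_mult_less_power_Suc[OF r, of 0 m] two_le_p by simp
      then have "a ^ r * y \<in> frob_chain p l (Suc m)" by (rule Suc.prems(2))
      then obtain v z where vz: "a ^ r * y = frob_comb p l v z" "z \<in> frob_chain p l m" by auto
      \<comment> \<open>\<open>a ^ (r + p * k) * y = (a ^ k) ^ p * (a ^ r * y)\<close>, and representations by
        \<open>frob_comb\<close> are unique\<close>
      have "a ^ k * z \<in> frob_chain p l m" if k: "k < p ^ m" for k
      proof -
        obtain v' z' where vz': "a ^ (r + p * k) * y = frob_comb p l v' z'" "z' \<in> frob_chain p l m"
          using Suc.prems(2)[OF add_mult_less_power_Suc[OF r k]] by auto
        have "a ^ (r + p * k) * y = (a ^ k) ^ p * (a ^ r * y)"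
          by (simp add: power_add mult_ac flip: power_mult)
        also have "\<dots> = frob_comb p l (\<lambda>i. a ^ k * v i) (a ^ k * z)"
          unfolding vz(1) by (rule frob_comb_pth_power_mult)
        finally have "z' = a ^ k * z" using vz'(1) frob_comb_inject(1)[OF l] by metis
        then show ?thesis using vz'(2) by simp
      qed
      then have "z = 0" using Suc.IH False by simp
      then show ?thesis using vz(1) by auto
    qed
  qed
qed simp

lemma frob_chain_tops_zero:
  assumes l: "(l::'a) \<notin> range (\<lambda>x. x ^ p)" and sub: "Kp_span p l \<subseteq> Kp_span p a" and n: "2 \<le> n"
    and tops: "\<And>j. j \<in> Jidx p n \<Longrightarrow> b * a ^ j = frob_comb p l (V j) (U j)"
    and chain: "\<And>j. j \<in> Jidx p n \<Longrightarrow> U j \<in> frob_chain p l (n - 1)"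
    and j: "j \<in> Jidx p n"
  shows "U j = 0"
proof -
  obtain m where m: "n = Suc m" "1 \<le> m" using n by (cases n) auto
  have shift: "U (r + p * k) = a ^ k * U r" if r: "r < p" "r \<noteq> p - 1" and k: "k < p ^ m" for r k
  proof -
    have "r \<in> Jidx p n" using add_mult_in_Jidx[OF r, of 0 m] m two_le_p by simp
    have "frob_comb p l (V (r + p * k)) (U (r + p * k)) = b * a ^ (r + p * k)"
      using tops add_mult_in_Jidx[OF r k] m by simp
    also have "\<dots> = (a ^ k) ^ p * (b * a ^ r)" by (simp add: power_add mult_ac flip: power_mult)
    also have "\<dots> = frob_comb p l (\<lambda>i. a ^ k * V r i) (a ^ k * U r)"
      using tops[OF \<open>r \<in> Jidx p n\<close>] by (simp add: frob_comb_pth_power_mult)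
    finally show ?thesis using frob_comb_inject(1)[OF l] by blast
  qed
  have "U r = 0" if r: "r < p" "r \<noteq> p - 1" for r
  proof (rule frob_chain_orbit_zero[OF l sub m(2)])
    fix k assume k: "k < p ^ m"
    show "a ^ k * U r \<in> frob_chain p l m"
      using chain[of "r + p * k"] add_mult_in_Jidx[OF r k] shift[OF r k] m(1) by simp
  qed
  moreover have "j = j mod p + p * (j div p)" by simp
  ultimately show ?thesis
    using shift Jidx_Suc_decompose j m(1) by (metis mult_zero_right)
qed

end

section \<open>Polynomials in \<open>S\<close> and the \<open>S\<^sub>j\<close>\<close>

definition mono_eval :: "(var \<Rightarrow> 'b::comm_ring_1) \<Rightarrow> (var \<Rightarrow>\<^sub>0 nat) \<Rightarrow> 'b" where
  "mono_eval \<sigma> m = (\<Prod>v\<in>Poly_Mapping.keys m. \<sigma> v ^ Poly_Mapping.lookup m v)"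

lemma mono_eval_superset:
  assumes "finite U" "Poly_Mapping.keys m \<subseteq> U"
  shows "mono_eval \<sigma> m = (\<Prod>v\<in>U. \<sigma> v ^ Poly_Mapping.lookup m v)"
  unfolding mono_eval_def by (rule prod.mono_neutral_left) (use assms in \<open>auto simp: in_keys_iff\<close>)

lemma mono_eval_add: "mono_eval \<sigma> (m + m') = mono_eval \<sigma> m * mono_eval \<sigma> m'"
proof -
  let ?U = "Poly_Mapping.keys m \<union> Poly_Mapping.keys m'"
  have "mono_eval \<sigma> (m + m') = (\<Prod>v\<in>?U. \<sigma> v ^ Poly_Mapping.lookup (m + m') v)"
    by (rule mono_eval_superset) (auto simp: in_keys_iff lookup_add)
  also have "\<dots> = mono_eval \<sigma> m * mono_eval \<sigma> m'"
    by (simp add: lookup_add power_add prod.distrib mono_eval_superset[of ?U])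
  finally show ?thesis .
qed

lemma mono_eval_zero [simp]: "mono_eval \<sigma> 0 = 1"
  by (simp add: mono_eval_def)

lemma mono_eval_single [simp]: "mono_eval \<sigma> (Poly_Mapping.single v k) = \<sigma> v ^ k"
  by (cases "k = 0") (simp_all add: mono_eval_def)

lemma poly_mapping_sum_single:
  assumes "finite M" "Poly_Mapping.keys P \<subseteq> M"
  shows "P = (\<Sum>m\<in>M. Poly_Mapping.single m (Poly_Mapping.lookup P m))"
  by (rule poly_mapping_eqI) (use assms in \<open>auto simp: lookup_sum lookup_single when_def in_keys_iff\<close>)

definition mpoly_subst :: "(var \<Rightarrow> 'k::comm_ring_1 poly poly) \<Rightarrow> 'k mpoly \<Rightarrow> 'k poly poly" where
  "mpoly_subst \<sigma> P = (\<Sum>m\<in>Poly_Mapping.keys P. [:[:Poly_Mapping.lookup P m:]:] * mono_eval \<sigma> m)"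

lemma mpoly_subst_superset:
  assumes "finite U" "Poly_Mapping.keys P \<subseteq> U"
  shows "mpoly_subst \<sigma> P = (\<Sum>m\<in>U. [:[:Poly_Mapping.lookup P m:]:] * mono_eval \<sigma> m)"
  unfolding mpoly_subst_def by (rule sum.mono_neutral_left) (use assms in \<open>auto simp: in_keys_iff\<close>)

lemma mpoly_subst_zero [simp]: "mpoly_subst \<sigma> 0 = 0"
  by (simp add: mpoly_subst_def)

lemma mpoly_subst_single [simp]:
  "mpoly_subst \<sigma> (Poly_Mapping.single m c) = [:[:c:]:] * mono_eval \<sigma> m"
  by (cases "c = 0") (simp_all add: mpoly_subst_def)

lemma mpoly_subst_add: "mpoly_subst \<sigma> (P + Q) = mpoly_subst \<sigma> P + mpoly_subst \<sigma> Q"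
proof -
  let ?U = "Poly_Mapping.keys P \<union> Poly_Mapping.keys Q"
  have "mpoly_subst \<sigma> (P + Q) = (\<Sum>m\<in>?U. [:[:Poly_Mapping.lookup (P + Q) m:]:] * mono_eval \<sigma> m)"
    by (rule mpoly_subst_superset) (auto simp: in_keys_iff lookup_add)
  also have "\<dots> = (\<Sum>m\<in>?U. [:[:Poly_Mapping.lookup P m:]:] * mono_eval \<sigma> m)
      + (\<Sum>m\<in>?U. [:[:Poly_Mapping.lookup Q m:]:] * mono_eval \<sigma> m)"
  proof -
    have "smult [:a + b:] x = smult [:a:] x + smult [:b:] x" for a b :: 'a and x :: "'a poly poly"
      by (metis add_pCons add.right_neutral smult_add_left)
    then show ?thesis by (simp add: lookup_add sum.distrib)
  qed
  also have "\<dots> = mpoly_subst \<sigma> P + mpoly_subst \<sigma> Q"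
    by (simp add: mpoly_subst_superset[of ?U])
  finally show ?thesis .
qed

lemma mpoly_subst_sum: "mpoly_subst \<sigma> (\<Sum>i\<in>A. f i) = (\<Sum>i\<in>A. mpoly_subst \<sigma> (f i))"
  by (induction A rule: infinite_finite_induct) (simp_all add: mpoly_subst_add)

lemma mpoly_subst_mult: "mpoly_subst \<sigma> (P * Q) = mpoly_subst \<sigma> P * mpoly_subst \<sigma> Q"
proof -
  let ?s = "\<lambda>P m. Poly_Mapping.single m (Poly_Mapping.lookup P m)"
  have expand: "R = (\<Sum>m\<in>Poly_Mapping.keys R. ?s R m)" for R :: "'a mpoly"
    by (rule poly_mapping_sum_single) simp_all
  have "P * Q = (\<Sum>m\<in>Poly_Mapping.keys P. \<Sum>m'\<in>Poly_Mapping.keys Q. ?s P m * ?s Q m')"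
    by (subst expand[of P], subst expand[of Q]) (simp add: sum_product)
  then have "mpoly_subst \<sigma> (P * Q) = (\<Sum>m\<in>Poly_Mapping.keys P. \<Sum>m'\<in>Poly_Mapping.keys Q.
       ([:[:Poly_Mapping.lookup P m:]:] * mono_eval \<sigma> m) * ([:[:Poly_Mapping.lookup Q m':]:] * mono_eval \<sigma> m'))"
    by (simp add: mpoly_subst_sum mult_single mono_eval_add mult_ac)
  also have "\<dots> = mpoly_subst \<sigma> P * mpoly_subst \<sigma> Q"
    by (simp add: mpoly_subst_def sum_product)
  finally show ?thesis .
qed

lemma mpoly_subst_power: "mpoly_subst \<sigma> (P ^ k) = mpoly_subst \<sigma> P ^ k"
proof (induction k)
  case 0
  have "(1::'a mpoly) = Poly_Mapping.single 0 1" by simp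
  then show ?case by (metis mpoly_subst_single mono_eval_zero mult_1_right one_pCons power_0)
qed (simp add: mpoly_subst_mult)

lemma mpoly_subst_uminus: "mpoly_subst \<sigma> (- P) = - mpoly_subst \<sigma> P"
  by (metis add_eq_0_iff mpoly_subst_add mpoly_subst_zero)

lemma mpoly_subst_diff: "mpoly_subst \<sigma> (P - Q) = mpoly_subst \<sigma> P - mpoly_subst \<sigma> Q"
  unfolding diff_conv_add_uminus mpoly_subst_add mpoly_subst_uminus ..

lemma mpoly_subst_mconst [simp]: "mpoly_subst \<sigma> (mconst c) = [:[:c:]:]"
  by (simp add: mconst_def flip: one_pCons)

lemma mpoly_subst_mvar [simp]: "mpoly_subst \<sigma> (mvar v) = \<sigma> v"
  by (simp add: mvar_def flip: one_pCons)

lemma single_SJ_in_range_single_iff: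
  assumes "k \<noteq> 0"
  shows "Poly_Mapping.single (SJ i) k \<in> range (Poly_Mapping.single (SJ j)) \<longleftrightarrow> i = j"
proof
  assume "Poly_Mapping.single (SJ i) k \<in> range (Poly_Mapping.single (SJ j))"
  then obtain t where "Poly_Mapping.single (SJ i) k = Poly_Mapping.single (SJ j) t" by auto
  then have "Poly_Mapping.lookup (Poly_Mapping.single (SJ i) k) (SJ i)
      = Poly_Mapping.lookup (Poly_Mapping.single (SJ j) t) (SJ i)" by simp
  then show "i = j" using assms by (auto simp: lookup_single when_def split: if_splits)
qed auto

definition mcoeff :: "'k::zero mpoly \<Rightarrow> var \<Rightarrow> nat \<Rightarrow> 'k" where
  "mcoeff P v k = Poly_Mapping.lookup P (Poly_Mapping.single v k)"

lemma single_SV_neq_single_SJ: "Poly_Mapping.single SV (1::nat) \<noteq> Poly_Mapping.single (SJ j) k"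
proof
  assume "Poly_Mapping.single SV 1 = Poly_Mapping.single (SJ j) k"
  then have "Poly_Mapping.lookup (Poly_Mapping.single SV (1::nat)) SV
      = Poly_Mapping.lookup (Poly_Mapping.single (SJ j) k) SV" by simp
  then show False by (simp add: lookup_single)
qed

lemma mconst_mult_mvar_power: "mconst c * mvar v ^ k = Poly_Mapping.single (Poly_Mapping.single v k) c"
proof -
  have "mvar v ^ k = Poly_Mapping.single (Poly_Mapping.single v k) (1::'a)"
  proof (induction k)
    case (Suc k)
    have "Poly_Mapping.single v 1 + Poly_Mapping.single v k = Poly_Mapping.single v (Suc k)"
      by (metis single_add plus_1_eq_Suc)
    then show ?case using Suc by (simp only: power_Suc mvar_def mult_single) simp
  qed (simp add: mvar_def)
  then show ?thesis by (simp add: mconst_def mult_single)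
qed

lemma hom_coord_keys:
  assumes "prime p" "hom_coord p n P" "m \<in> Poly_Mapping.keys P"
  shows "m = Poly_Mapping.single SV 1 \<or> (\<exists>k\<in>Jidx p n. \<exists>e. m = Poly_Mapping.single (SJ k) (p ^ e))"
proof -
  obtain v e where m: "m = Poly_Mapping.single v (p ^ e)"
    using assms(2,3) unfolding hom_coord_def is_ppoly_def by blast
  have "p ^ e \<noteq> 0" using assms(1) by (simp add: prime_gt_0_nat)
  show ?thesis
  proof (cases v)
    case SV
    have "Poly_Mapping.lookup m SV \<le> 1" using assms(2,3) unfolding hom_coord_def degS_le1_def by blast
    then have "p ^ e \<le> 1" using m SV by simp
    then have "p ^ e = 1" using \<open>p ^ e \<noteq> 0\<close> by linarith
    with m SV have "m = Poly_Mapping.single SV 1" by (simp only:)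
    then show ?thesis by blast
  next
    case (SJ k)
    then have "k \<in> Jidx p n" using assms(2,3) m \<open>p ^ e \<noteq> 0\<close> unfolding hom_coord_def by force
    then show ?thesis using m SJ by blast
  qed
qed

lemma hom_coord_eq_0I:
  assumes "prime p" "hom_coord p n P" "mcoeff P SV 1 = 0"
    and "\<And>k e. k \<in> Jidx p n \<Longrightarrow> mcoeff P (SJ k) (p ^ e) = 0"
  shows "P = 0"
proof (rule poly_mapping_eqI)
  fix m
  show "Poly_Mapping.lookup P m = Poly_Mapping.lookup 0 m"
  proof (cases "m \<in> Poly_Mapping.keys P")
    case True
    then show ?thesis using hom_coord_keys[OF assms(1,2) True] assms(3,4) by (auto simp: mcoeff_def)
  qed (simp add: in_keys_iff)
qed

lemma hom_coord_keys_subset: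
  assumes "prime p" "hom_coord p n P"
    and "\<And>k e. k \<in> Jidx p n \<Longrightarrow> e \<noteq> N \<Longrightarrow> mcoeff P (SJ k) (p ^ e) = 0"
  shows "Poly_Mapping.keys P \<subseteq> insert (Poly_Mapping.single SV 1) ((\<lambda>j. Poly_Mapping.single (SJ j) (p ^ N)) ` Jidx p n)"
proof
  fix m assume m: "m \<in> Poly_Mapping.keys P"
  from hom_coord_keys[OF assms(1,2) m]
  show "m \<in> insert (Poly_Mapping.single SV 1) ((\<lambda>j. Poly_Mapping.single (SJ j) (p ^ N)) ` Jidx p n)"
  proof (elim disjE bexE exE)
    fix k e assume k: "k \<in> Jidx p n" and m_eq: "m = Poly_Mapping.single (SJ k) (p ^ e)"
    then have "mcoeff P (SJ k) (p ^ e) \<noteq> 0" using m by (simp add: mcoeff_def in_keys_iff)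
    then have "e = N" using assms(3) k by blast
    then show ?thesis using k m_eq by blast
  qed simp
qed

lemma mpoly_eq_linear_form:
  assumes "N \<noteq> 0"
    and keys: "Poly_Mapping.keys P \<subseteq> insert (Poly_Mapping.single SV 1) ((\<lambda>j. Poly_Mapping.single (SJ j) N) ` Jidx p n)"
  shows "P = mconst (mcoeff P SV 1) * mvar SV + (\<Sum>j\<in>Jidx p n. mconst (mcoeff P (SJ j) N) * mvar (SJ j) ^ N)"
proof -
  let ?s = "\<lambda>m. Poly_Mapping.single m (Poly_Mapping.lookup P m)"
  have inj: "inj_on (\<lambda>j. Poly_Mapping.single (SJ j) N) (Jidx p n)"
    by (intro inj_onI) (metis assms(1) lookup_single_eq lookup_single_not_eq var.inject)
  have "Poly_Mapping.single SV 1 \<notin> (\<lambda>j. Poly_Mapping.single (SJ j) N) ` Jidx p n"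
    using single_SV_neq_single_SJ by auto
  have "P = (\<Sum>m\<in>insert (Poly_Mapping.single SV 1) ((\<lambda>j. Poly_Mapping.single (SJ j) N) ` Jidx p n). ?s m)"
    using finite_Jidx keys by (intro poly_mapping_sum_single) simp_all
  also have "\<dots> = ?s (Poly_Mapping.single SV 1) + (\<Sum>j\<in>Jidx p n. ?s (Poly_Mapping.single (SJ j) N))"
    using finite_Jidx \<open>Poly_Mapping.single SV 1 \<notin> _\<close> by (simp add: sum.reindex[OF inj])
  finally have P_eq: "P = ?s (Poly_Mapping.single SV 1) + (\<Sum>j\<in>Jidx p n. ?s (Poly_Mapping.single (SJ j) N))" .
  have "mconst c * mvar SV = Poly_Mapping.single (Poly_Mapping.single SV 1) c" for c :: 'a
    using mconst_mult_mvar_power[of c SV 1] by simp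
  then show ?thesis unfolding mconst_mult_mvar_power mcoeff_def by (rule ssubst) (rule P_eq)
qed

lemma trinomial_factor_const:
  fixes A B C A' B' C' :: "'a::idom"
  assumes d: "2 \<le> d" and C': "C' \<noteq> 0"
    and eq: "[:A:] + monom B 1 + monom C d = ([:A':] + monom B' 1 + monom C' d) * g"
  shows "A = coeff g 0 * A' \<and> B = coeff g 0 * B' \<and> C = coeff g 0 * C'"
proof -
  define W where "W = [:A':] + monom B' 1 + monom C' d"
  have coeff_tri: "coeff ([:a:] + monom b 1 + monom c d) k
      = (if k = 0 then a else 0) + (if k = 1 then b else 0) + (if k = d then c else 0)" for a b c :: 'a and k
    by (simp add: coeff_monom coeff_pCons split: nat.splits)
  have coeff_W: "coeff W k = (if k = 0 then A' else 0) + (if k = 1 then B' else 0) + (if k = d then C' else 0)" for k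
    unfolding W_def by (rule coeff_tri)
  have "degree W = d"
    using d C' by (intro antisym degree_le le_degree) (auto simp: coeff_W)
  have "g = [:coeff g 0:]"
  proof (cases "g = 0")
    case False
    have "degree ([:A:] + monom B 1 + monom C d) \<le> d"
      using d by (intro degree_le) (simp only: coeff_tri, simp)
    moreover have "W \<noteq> 0" using \<open>degree W = d\<close> d by auto
    then have "d + degree g = degree ([:A:] + monom B 1 + monom C d)"
      using eq degree_mult_eq[of W g] False \<open>degree W = d\<close> by (simp add: W_def)
    ultimately have "degree g = 0" by linarith
    then show ?thesis by (metis degree_eq_zeroE coeff_pCons_0)
  qed simp
  then have "[:A:] + monom B 1 + monom C d = W * [:coeff g 0:]"
    using eq by (simp add: W_def)
  then have "[:A:] + monom B 1 + monom C d = smult (coeff g 0) W" by simp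
  from arg_cong[OF this, of "\<lambda>f. coeff f 0"] arg_cong[OF this, of "\<lambda>f. coeff f 1"]
    arg_cong[OF this, of "\<lambda>f. coeff f d"]
  moreover have "coeff [:a:] d = 0" for a :: 'a using d by (simp add: coeff_pCons split: nat.splits)
  ultimately show ?thesis using d by (simp add: coeff_W coeff_tri)
qed

definition spec :: "nat \<Rightarrow> var \<Rightarrow> 'k::comm_ring_1 poly poly" where
  "spec j v = (case v of SV \<Rightarrow> monom 1 1 | SJ k \<Rightarrow> if k = j then [:monom 1 1:] else 0)"

definition Sj_poly :: "'k::comm_ring_1 mpoly \<Rightarrow> nat \<Rightarrow> 'k poly" where
  "Sj_poly P j = (\<Sum>m\<in>Poly_Mapping.keys P. if m \<in> range (Poly_Mapping.single (SJ j))
      then monom (Poly_Mapping.lookup P m) (Poly_Mapping.lookup m (SJ j)) else 0)"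

lemma coeff_Sj_poly: "coeff (Sj_poly P j) k = mcoeff P (SJ j) k"
proof -
  have "coeff (Sj_poly P j) k = (\<Sum>m\<in>Poly_Mapping.keys P.
      if m = Poly_Mapping.single (SJ j) k then Poly_Mapping.lookup P m else 0)"
    unfolding Sj_poly_def coeff_sum by (intro sum.cong refl) (auto simp: coeff_monom)
  also have "\<dots> = mcoeff P (SJ j) k" by (simp add: mcoeff_def in_keys_iff)
  finally show ?thesis .
qed

lemma mpoly_subst_spec_hom_coord:
  assumes "prime p" "hom_coord p n P"
  shows "mpoly_subst (spec j) P = [:Sj_poly P j:] + monom [:mcoeff P SV 1:] 1"
proof -
  let ?a = "mcoeff P SV 1"
  have "monom [:?a:] 1 = (\<Sum>m\<in>Poly_Mapping.keys P. if m = Poly_Mapping.single SV 1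
      then monom [:Poly_Mapping.lookup P m:] 1 else 0)"
    by (simp add: mcoeff_def in_keys_iff)
  then have rhs: "[:Sj_poly P j:] + monom [:?a:] 1 = (\<Sum>m\<in>Poly_Mapping.keys P.
      [:if m \<in> range (Poly_Mapping.single (SJ j))
        then monom (Poly_Mapping.lookup P m) (Poly_Mapping.lookup m (SJ j)) else 0:] +
      (if m = Poly_Mapping.single SV 1 then monom [:Poly_Mapping.lookup P m:] 1 else 0))"
    by (simp add: Sj_poly_def sum.distrib flip: sum_to_poly)
  have "p \<noteq> 0" using assms(1) by auto
  then have pe: "p ^ e \<noteq> 0" for e by simp
  show ?thesis
    unfolding rhs mpoly_subst_def
  proof (intro sum.cong refl)
    fix m assume m_key: "m \<in> Poly_Mapping.keys P"
    let ?c = "Poly_Mapping.lookup P m"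
    from hom_coord_keys[OF assms m_key] show "[:[:?c:]:] * mono_eval (spec j) m =
      [:if m \<in> range (Poly_Mapping.single (SJ j)) then monom ?c (Poly_Mapping.lookup m (SJ j)) else 0:] +
      (if m = Poly_Mapping.single SV 1 then monom [:?c:] 1 else 0)"
    proof
      assume m: "m = Poly_Mapping.single SV 1"
      then have "m \<notin> range (Poly_Mapping.single (SJ j))" using single_SV_neq_single_SJ by auto
      then show ?thesis using m by (simp add: spec_def smult_monom)
    next
      assume "\<exists>k\<in>Jidx p n. \<exists>e. m = Poly_Mapping.single (SJ k) (p ^ e)"
      then obtain k e where m: "m = Poly_Mapping.single (SJ k) (p ^ e)" by blast
      have "m \<noteq> Poly_Mapping.single SV 1" using m single_SV_neq_single_SJ by metis
      moreover have "m \<in> range (Poly_Mapping.single (SJ j)) \<longleftrightarrow> k = j"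
        unfolding m by (rule single_SJ_in_range_single_iff[OF pe])
      ultimately show ?thesis
        using m \<open>p \<noteq> 0\<close> by (cases "k = j") (simp_all add: spec_def poly_const_pow monom_power smult_monom power_0_left)
    qed
  qed
qed

lemma mpoly_subst_spec_Veq:
  assumes "j \<in> Jidx p n" "2 \<le> p"
  shows "mpoly_subst (spec j) (Veq p n \<alpha>) = [:monom (\<alpha> ^ j) (p ^ n):] + monom (- 1) 1 + monom [:\<alpha> ^ (p - 1):] p"
proof -
  have "(\<Sum>k\<in>Jidx p n. mpoly_subst (spec j) (mconst (\<alpha> ^ k) * mvar (SJ k) ^ p ^ n))
      = (\<Sum>k\<in>Jidx p n. if k = j then [:monom (\<alpha> ^ k) (p ^ n):] else 0)"
    using assms(2) by (intro sum.cong refl)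
      (auto simp: mpoly_subst_mult mpoly_subst_power spec_def poly_const_pow monom_power smult_monom
        power_0_left)
  also have "\<dots> = [:monom (\<alpha> ^ j) (p ^ n):]" using assms(1) finite_Jidx by simp
  finally show ?thesis
    by (simp add: Veq_def mpoly_subst_add mpoly_subst_diff mpoly_subst_sum mpoly_subst_mult
        mpoly_subst_power spec_def monom_power smult_monom minus_monom)
qed

context prime_char
begin

lemma power_p_linear_poly:
  fixes \<phi> :: "'a poly"
  shows "([:\<phi>:] + monom [:c:] 1) ^ p = [:\<phi> ^ p:] + monom [:c ^ p:] p"
proof -
  have "([:\<phi>:] + monom [:c:] 1) ^ p = [:\<phi>:] ^ p + monom [:c:] 1 ^ p"
    by (rule freshmans_dream) (simp_all add: CHAR_eq prime)
  then show ?thesis by (simp add: poly_const_pow monom_power)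
qed

lemma V1_equation_linear_polys:
  fixes \<phi> :: "'a poly" and \<psi> :: "nat \<Rightarrow> 'a poly"
  shows "- ([:\<phi>:] + monom [:c:] 1) + [:[:l ^ (p - 1):]:] * ([:\<phi>:] + monom [:c:] 1) ^ p
      + (\<Sum>i<p - 1. [:[:l ^ i:]:] * ([:\<psi> i:] + monom [:d i:] 1) ^ p)
    = [:- \<phi> + smult (l ^ (p - 1)) (\<phi> ^ p) + (\<Sum>i<p - 1. smult (l ^ i) (\<psi> i ^ p)):]
      + monom [:- c:] 1 + monom [:frob_comb p l d c:] p" (is "?L = ?R")
proof (rule poly_eqI)
  fix k
  have const: "coeff [:X:] k = (if k = 0 then X else 0)" for X :: "'a poly"
    by (simp add: coeff_pCons split: nat.splits)
  show "coeff ?L k = coeff ?R k"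
    unfolding power_p_linear_poly using two_le_p
    by (simp add: const coeff_sum coeff_monom frob_comb_def sum_to_poly)
qed

end

section \<open>Homomorphisms \<open>V\<^sub>n\<^sub>,\<^sub>\<alpha> \<rightarrow> V\<^sub>1\<^sub>,\<^sub>\<lambda>\<close>\<close>

locale V_hom = prime_char p field_type for p and field_type :: "'a::field itself" +
  fixes n :: nat and \<alpha> lam :: 'a and F :: "'a mpoly" and Fs :: "nat \<Rightarrow> 'a mpoly"
  assumes one_le_n: "1 \<le> n"
    and alpha: "\<alpha> \<notin> range (\<lambda>x. x ^ p)" and lam: "lam \<notin> range (\<lambda>x. x ^ p)"
    and hom: "is_hom_V p n \<alpha> lam F Fs" and nonzero: "F \<noteq> 0 \<or> (\<exists>j<p - 1. Fs j \<noteq> 0)"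
begin

abbreviation aF :: 'a where "aF \<equiv> mcoeff F SV 1"

abbreviation aFs :: "nat \<Rightarrow> 'a" where "aFs i \<equiv> mcoeff (Fs i) SV 1"

abbreviation bF :: "nat \<Rightarrow> nat \<Rightarrow> 'a" where "bF j e \<equiv> mcoeff F (SJ j) (p ^ e)"

abbreviation bFs :: "nat \<Rightarrow> nat \<Rightarrow> nat \<Rightarrow> 'a" where "bFs j i e \<equiv> mcoeff (Fs i) (SJ j) (p ^ e)"

lemma hom_coord_F: "hom_coord p n F"
  using hom by (simp add: is_hom_V_def)

lemma hom_coord_Fs: "i < p - 1 \<Longrightarrow> hom_coord p n (Fs i)"
  using hom by (simp add: is_hom_V_def)

lemma alpha_nonzero: "\<alpha> \<noteq> 0"
  using alpha zero_power_p by (metis rangeI)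

lemma zero_in_Jidx: "0 \<in> Jidx p n"
  using two_le_p by (simp add: Jidx_def)

lemma spec_identities:
  assumes j: "j \<in> Jidx p n"
  shows "- Sj_poly F j + smult (lam ^ (p - 1)) (Sj_poly F j ^ p)
      + (\<Sum>i<p - 1. smult (lam ^ i) (Sj_poly (Fs i) j ^ p)) = monom (aF * \<alpha> ^ j) (p ^ n)"
    and "frob_comb p lam aFs aF = aF * \<alpha> ^ (p - 1)"
proof -
  let ?\<Phi> = "- Sj_poly F j + smult (lam ^ (p - 1)) (Sj_poly F j ^ p)
      + (\<Sum>i<p - 1. smult (lam ^ i) (Sj_poly (Fs i) j ^ p))"
  obtain Q where Q: "- F + mconst (lam ^ (p - 1)) * F ^ p + (\<Sum>i<p - 1. mconst (lam ^ i) * Fs i ^ p)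
      = Veq p n \<alpha> * Q"
    using hom by (auto simp: is_hom_V_def elim!: dvdE)
  have "mpoly_subst (spec j) (- F + mconst (lam ^ (p - 1)) * F ^ p + (\<Sum>i<p - 1. mconst (lam ^ i) * Fs i ^ p))
      = - ([:Sj_poly F j:] + monom [:aF:] 1) + [:[:lam ^ (p - 1):]:] * ([:Sj_poly F j:] + monom [:aF:] 1) ^ p
        + (\<Sum>i<p - 1. [:[:lam ^ i:]:] * ([:Sj_poly (Fs i) j:] + monom [:aFs i:] 1) ^ p)"
    unfolding mpoly_subst_add mpoly_subst_uminus mpoly_subst_sum mpoly_subst_mult mpoly_subst_power
      mpoly_subst_mconst mpoly_subst_spec_hom_coord[OF prime hom_coord_F]
    by (intro arg_cong2[where f = "(+)"] refl sum.cong)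
      (simp_all add: mpoly_subst_spec_hom_coord[OF prime hom_coord_Fs])
  also have "\<dots> = [:?\<Phi>:] + monom [:- aF:] 1 + monom [:frob_comb p lam aFs aF:] p"
    by (rule V1_equation_linear_polys)
  finally have "[:?\<Phi>:] + monom [:- aF:] 1 + monom [:frob_comb p lam aFs aF:] p
      = ([:monom (\<alpha> ^ j) (p ^ n):] + monom (- 1) 1 + monom [:\<alpha> ^ (p - 1):] p) * mpoly_subst (spec j) Q"
    using arg_cong[OF Q, of "mpoly_subst (spec j)"]
    by (simp add: mpoly_subst_mult mpoly_subst_spec_Veq[OF j two_le_p])
  from trinomial_factor_const[OF two_le_p _ this] alpha_nonzero
  obtain g0 where g0: "?\<Phi> = g0 * monom (\<alpha> ^ j) (p ^ n)" "[:- aF:] = g0 * - 1"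
    "[:frob_comb p lam aFs aF:] = g0 * [:\<alpha> ^ (p - 1):]"
    by auto
  have "g0 = - [:- aF:]" using g0(2) by simp
  also have "\<dots> = [:aF:]" by simp
  finally have "g0 = [:aF:]" .
  then show "?\<Phi> = monom (aF * \<alpha> ^ j) (p ^ n)" "frob_comb p lam aFs aF = aF * \<alpha> ^ (p - 1)"
    using g0 by (simp_all add: smult_monom)
qed

lemma Sj_coeffs_vanish_above:
  "j \<in> Jidx p n \<Longrightarrow> n \<le> e \<Longrightarrow> bF j e = 0 \<and> (\<forall>i<p - 1. bFs j i e = 0)"
  using V1_pullback_p_power_coeffs_vanish[OF lam spec_identities(1)] by (simp add: coeff_Sj_poly)

lemma bF_0: "j \<in> Jidx p n \<Longrightarrow> bF j 0 = 0"
  using V1_pullback_coeff_1[OF lam spec_identities(1) one_le_n] by (simp add: coeff_Sj_poly)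

lemma bF_Suc: "j \<in> Jidx p n \<Longrightarrow> Suc e < n \<Longrightarrow> bF j (Suc e) = frob_comb p lam (\<lambda>i. bFs j i e) (bF j e)"
  using V1_pullback_coeff_p_power_Suc[OF lam spec_identities(1), of j e] by (simp add: coeff_Sj_poly)

lemma frob_comb_bF_top:
  assumes j: "j \<in> Jidx p n"
  shows "frob_comb p lam (\<lambda>i. bFs j i (n - 1)) (bF j (n - 1)) = aF * \<alpha> ^ j"
proof -
  have "Suc (n - 1) = n" using one_le_n by simp
  then show ?thesis
    using V1_pullback_coeff_p_power_Suc[OF lam spec_identities(1)[OF j], of "n - 1"] Sj_coeffs_vanish_above[OF j, of n]
    by (simp add: coeff_Sj_poly)
qed

lemma frob_comb_aFs: "frob_comb p lam aFs aF = aF * \<alpha> ^ (p - 1)"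
  using spec_identities(2)[OF zero_in_Jidx] .

lemma Sj_coeffs_vanish_off_top:
  assumes j: "j \<in> Jidx p n" and top: "bF j (n - 1) = 0" and e: "e \<noteq> n - 1"
  shows "bF j e = 0 \<and> (\<forall>i<p - 1. bFs j i e = 0)"
proof (cases "e < n - 1")
  case True
  have step: "\<And>e. Suc e < n \<Longrightarrow> bF j (Suc e) = frob_comb p lam (\<lambda>i. bFs j i e) (bF j e)"
    by (rule bF_Suc[OF j])
  show ?thesis
    using frob_chain_vanish_below[OF lam, where n = n and u = "bF j" and v = "\<lambda>e i. bFs j i e",
        OF step, where m = "n - 1"] top True one_le_n by simp
next
  case False
  then show ?thesis using Sj_coeffs_vanish_above[OF j] e by simp
qed

lemma aF_nonzero: "aF \<noteq> 0"
proof
  assume aF: "aF = 0"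
  have vanish: "bF j e = 0 \<and> (\<forall>i<p - 1. bFs j i e = 0)" if j: "j \<in> Jidx p n" for j e
  proof -
    have "frob_comb p lam (\<lambda>i. bFs j i (n - 1)) (bF j (n - 1)) = 0"
      using frob_comb_bF_top[OF j] aF by simp
    then have "bF j (n - 1) = 0 \<and> (\<forall>i<p - 1. bFs j i (n - 1) = 0)"
      using frob_comb_eq_0D[OF lam] by blast
    then show ?thesis using Sj_coeffs_vanish_off_top[OF j] by (cases "e = n - 1") auto
  qed
  have "frob_comb p lam aFs 0 = 0" using frob_comb_aFs aF by simp
  then have "aFs i = 0" if "i < p - 1" for i using frob_comb_eq_0D(2)[OF lam] that by blast
  then have "F = 0 \<and> (\<forall>i<p - 1. Fs i = 0)"
    using vanish aF hom_coord_eq_0I[OF prime hom_coord_F] hom_coord_eq_0I[OF prime hom_coord_Fs] by blast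
  then show False using nonzero by blast
qed

lemma alpha_in_Kp_span_lam: "\<alpha> \<in> Kp_span p lam"
proof -
  have "aF \<in> Kp_span p lam"
    using frob_comb_bF_top[OF zero_in_Jidx] frob_comb_in_Kp_span by (metis mult_1_right power_0)
  moreover have "aF * \<alpha> ^ (p - 1) \<in> Kp_span p lam"
    using frob_comb_aFs frob_comb_in_Kp_span by metis
  moreover have "\<alpha> = \<alpha> ^ p * aF / (aF * \<alpha> ^ (p - 1))"
  proof -
    have "\<alpha> ^ p = \<alpha> * \<alpha> ^ (p - 1)" using two_le_p by (simp flip: power_Suc)
    then show ?thesis using aF_nonzero alpha_nonzero by simp
  qed
  ultimately show ?thesis
    using is_subfield_divide[OF subfield_Kp_span Kp_span_pth_power_mult] by metis
qed

lemma Kp_span_alpha_eq: "Kp_span p \<alpha> = Kp_span p lam"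
  by (rule Kp_span_eq_if_mem[OF alpha_in_Kp_span_lam alpha])

lemma bF_top_zero:
  assumes j: "j \<in> Jidx p n"
  shows "bF j (n - 1) = 0"
proof (cases "n = 1")
  case True
  then show ?thesis using bF_0[OF j] by simp
next
  case False
  show ?thesis
  proof (rule frob_chain_tops_zero[OF lam, where a = \<alpha> and b = aF and V = "\<lambda>j i. bFs j i (n - 1)"
        and U = "\<lambda>j. bF j (n - 1)"])
    show "Kp_span p lam \<subseteq> Kp_span p \<alpha>" using Kp_span_alpha_eq by simp
    show "2 \<le> n" using False one_le_n by simp
    show "aF * \<alpha> ^ k = frob_comb p lam (\<lambda>i. bFs k i (n - 1)) (bF k (n - 1))" if "k \<in> Jidx p n" for k
      using frob_comb_bF_top[OF that] by simp
    show "bF k (n - 1) \<in> frob_chain p lam (n - 1)" if k: "k \<in> Jidx p n" for k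
    proof -
      have step: "\<And>e. Suc e < n \<Longrightarrow> bF k (Suc e) = frob_comb p lam (\<lambda>i. bFs k i e) (bF k e)"
        by (rule bF_Suc[OF k])
      show ?thesis
        using frob_chain_mem[where u = "bF k" and v = "\<lambda>e i. bFs k i e", OF bF_0[OF k] step] one_le_n
        by simp
    qed
  qed (rule j)
qed

lemma bF_eq_0: "j \<in> Jidx p n \<Longrightarrow> bF j e = 0"
  using Sj_coeffs_vanish_off_top[OF _ bF_top_zero] bF_top_zero by (cases "e = n - 1") auto

lemma bFs_eq_0: "j \<in> Jidx p n \<Longrightarrow> i < p - 1 \<Longrightarrow> e \<noteq> n - 1 \<Longrightarrow> bFs j i e = 0"
  using Sj_coeffs_vanish_off_top[OF _ bF_top_zero] by blast

lemma F_eq: "F = mconst aF * mvar SV"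
proof -
  have "Poly_Mapping.keys F
      \<subseteq> insert (Poly_Mapping.single SV 1) ((\<lambda>j. Poly_Mapping.single (SJ j) (p ^ (n - 1))) ` Jidx p n)"
    using bF_eq_0 by (intro hom_coord_keys_subset[OF prime hom_coord_F])
  then have "F = mconst aF * mvar SV
      + (\<Sum>j\<in>Jidx p n. mconst (bF j (n - 1)) * mvar (SJ j) ^ p ^ (n - 1))"
    using two_le_p by (intro mpoly_eq_linear_form) simp_all
  then show ?thesis using bF_top_zero by (simp add: mconst_def)
qed

lemma Fs_eq:
  assumes i: "i < p - 1"
  shows "Fs i = mconst (aFs i) * mvar SV
    + (\<Sum>j\<in>Jidx p n. mconst (bFs j i (n - 1)) * mvar (SJ j) ^ p ^ (n - 1))"
proof -
  have "Poly_Mapping.keys (Fs i)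
      \<subseteq> insert (Poly_Mapping.single SV 1) ((\<lambda>j. Poly_Mapping.single (SJ j) (p ^ (n - 1))) ` Jidx p n)"
    using bFs_eq_0[OF _ i] by (intro hom_coord_keys_subset[OF prime hom_coord_Fs[OF i]])
  then show ?thesis using two_le_p by (intro mpoly_eq_linear_form) simp_all
qed

end

theorem lemma3p3:
  fixes \<alpha> lam :: "'k::field" and p n :: nat
    and F :: "'k mpoly" and Fs :: "nat \<Rightarrow> 'k mpoly"
  assumes "CHAR('k) = p" and "prime p" and "n \<ge> 1"
    and "\<alpha> \<notin> range (\<lambda>x. x ^ p)" and "lam \<notin> range (\<lambda>x. x ^ p)"
    and "is_hom_V p n \<alpha> lam F Fs"
    and "F \<noteq> 0 \<or> (\<exists>j<p - 1. Fs j \<noteq> 0)"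
  shows "Kp_adj p \<alpha> = Kp_adj p lam
    \<and> (\<forall>P \<in> insert F (Fs ` {..<p - 1}). \<exists>a b.
          P = mconst a * mvar SV + (\<Sum>j\<in>Jidx p n. mconst (b j) * mvar (SJ j) ^ (p ^ (n - 1))))
    \<and> (\<exists>a. a \<noteq> 0 \<and> F = mconst a * mvar SV)"
proof -
  interpret V_hom p "TYPE('k)" n \<alpha> lam F Fs
    using assms by unfold_locales
  have "\<exists>a b. F = mconst a * mvar SV + (\<Sum>j\<in>Jidx p n. mconst (b j) * mvar (SJ j) ^ (p ^ (n - 1)))"
    using F_eq by (intro exI[of _ aF] exI[of _ "\<lambda>_. 0"]) (simp add: mconst_def)
  moreover have "\<exists>a b. Fs i = mconst a * mvar SV + (\<Sum>j\<in>Jidx p n. mconst (b j) * mvar (SJ j) ^ (p ^ (n - 1)))"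
    if "i < p - 1" for i
    using Fs_eq[OF that] by (intro exI[of _ "aFs i"] exI[of _ "\<lambda>j. bFs j i (n - 1)"])
  ultimately show ?thesis
    using Kp_span_alpha_eq F_eq aF_nonzero by (auto simp: Kp_adj_eq_Kp_span)
qed

end
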